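(* Let $T_1,T_2$ be trees on $X$ and let $Q$ be a set of quartets that are incompatible with $(T_1,T_2)$ and pairwise $T_1$-leg-disjoint. Then $d_{\mathrm{MP}}^t(T_1,T_2)\ge |Q|/27$ for all $t\in\{2,3,\dots\}\cup\{\infty\}$.
   Context: A tree on $X$ is an unrooted tree with leaf set $X$ whose internal vertices have degree at most $3$. A quartet is a $4$-element subset $q\subseteq X$; $T|_q$ is the tree obtained from the minimal subtree of $T$ spanning $q$ by suppressing degree-2 vertices, and $T|_q=ab|cd$ means $q=\{a,b,c,d\}$ and the $a$–$b$ path and $c$–$d$ path in $T$ are vertex-disjoint. $q$ is incompatible with $(T_1,T_2)$ if $T_1|_q\neq T_2|_q$. If $T_1|_q=ab|cd$, the legs of $q$ in $T_1$ are the path from $a$ to $b$ and the path from $c$ to $d$ in $T_1$. Two quartets are $T_1$-leg-disjoint if no edge of $T_1$ lies on a leg of both. A character on $X$ is a map $f:X\to S$, $S$ nonempty, $t$-state if $|S|=t$; $l_f(T)$ is the minimum over labellings of $V(T)$ extending $f$ of the number of edges with differently labelled endpoints; $d_{\mathrm{MP}}^t(T_1,T_2)=\max_f|l_f(T_1)-l_f(T_2)|$ over $t$-state characters (all characters if $t=\infty$). *)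

theory Defs
  imports Main "HOL-Library.Extended_Nat"
begin

definition is_path :: "'v set set \<Rightarrow> 'v list \<Rightarrow> bool" where
  "is_path E p \<longleftrightarrow> p \<noteq> [] \<and> distinct p \<and> (\<forall>i. Suc i < length p \<longrightarrow> {p ! i, p ! Suc i} \<in> E)"

definition path_edges :: "'v list \<Rightarrow> 'v set set" where
  "path_edges p = {{p ! i, p ! Suc i} | i. Suc i < length p}"

definition deg :: "'v set set \<Rightarrow> 'v \<Rightarrow> nat" where
  "deg E v = card {e \<in> E. v \<in> e}"

definition is_tree_on :: "'v set \<Rightarrow> 'v set set \<Rightarrow> 'v set \<Rightarrow> bool" where
  "is_tree_on V E X \<longleftrightarrow>
     finite V \<and> V \<noteq> {} \<and>
     (\<forall>e\<in>E. \<exists>u v. u \<in> V \<and> v \<in> V \<and> u \<noteq> v \<and> e = {u, v}) \<and>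
     (\<forall>u\<in>V. \<forall>v\<in>V. \<exists>!p. is_path E p \<and> hd p = u \<and> last p = v) \<and>
     X = {v \<in> V. deg E v \<le> 1} \<and>
     (\<forall>v \<in> V - X. deg E v \<le> 3)"

definition tpath :: "'v set set \<Rightarrow> 'v \<Rightarrow> 'v \<Rightarrow> 'v list" where
  "tpath E u v = (THE p. is_path E p \<and> hd p = u \<and> last p = v)"

definition quartet_top :: "'v set set \<Rightarrow> 'v set \<Rightarrow> 'v set set set" where
  "quartet_top E q = {{{a, b}, {c, d}} | a b c d.
      q = {a, b, c, d} \<and> card q = 4 \<and> set (tpath E a b) \<inter> set (tpath E c d) = {}}"

definition incompatible :: "'v set set \<Rightarrow> 'v set set \<Rightarrow> 'v set \<Rightarrow> bool" where
  "incompatible E1 E2 q \<longleftrightarrow> quartet_top E1 q \<noteq> quartet_top E2 q"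

definition leg_edges :: "'v set set \<Rightarrow> 'v set \<Rightarrow> 'v set set" where
  "leg_edges E q = \<Union> {path_edges (tpath E a b) \<union> path_edges (tpath E c d) | a b c d.
      {{a, b}, {c, d}} \<in> quartet_top E q}"

definition leg_disjoint :: "'v set set \<Rightarrow> 'v set \<Rightarrow> 'v set \<Rightarrow> bool" where
  "leg_disjoint E q q' \<longleftrightarrow> leg_edges E q \<inter> leg_edges E q' = {}"

definition states :: "enat \<Rightarrow> nat set" where
  "states t = {n. enat n < t}"

definition changes :: "'v set set \<Rightarrow> ('v \<Rightarrow> nat) \<Rightarrow> nat" where
  "changes E g = card {e \<in> E. \<exists>u v. e = {u, v} \<and> g u \<noteq> g v}"

definition pscore :: "'v set \<Rightarrow> 'v set set \<Rightarrow> 'v set \<Rightarrow> nat set \<Rightarrow> ('v \<Rightarrow> nat) \<Rightarrow> nat" where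
  "pscore V E X S f = (LEAST k. \<exists>g. (\<forall>x\<in>X. g x = f x) \<and> (\<forall>v\<in>V. g v \<in> S) \<and> changes E g = k)"

definition dMP :: "enat \<Rightarrow> 'v set \<Rightarrow> 'v set set \<Rightarrow> 'v set \<Rightarrow> 'v set set \<Rightarrow> 'v set \<Rightarrow> int" where
  "dMP t V1 E1 V2 E2 X = Max {\<bar>int (pscore V1 E1 X (states t) f) - int (pscore V2 E2 X (states t) f)\<bar>
      | f. \<forall>x\<in>X. f x \<in> states t}"

end

theory Submission
  imports Defs
begin

text \<open>
  Every quartet of leaves is resolved in a tree, so for an incompatible quartet with
  \<open>T\<^sub>1|q = ab|cd\<close> there is an edge of \<open>T\<^sub>2\<close> separating \<open>a\<close> from \<open>b\<close> and \<open>c\<close> from \<open>d\<close>;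
  choose one such edge per quartet.  For a set \<open>C\<close> of these edges, colour every vertex
  by the parity of the number of edges of \<open>C\<close> between it and a fixed root of \<open>T\<^sub>2\<close>.
  This 2-state character changes only across edges of \<open>C\<close>, so \<open>l\<^sub>f(T\<^sub>2) \<le> |C|\<close>.  The ends
  of a leg get different colours iff an odd number of edges of \<open>C\<close> separate them in
  \<open>T\<^sub>2\<close>, and then every extension of \<open>f\<close> to \<open>T\<^sub>1\<close> changes along that leg; the legs are
  edge-disjoint, so \<open>l\<^sub>f(T\<^sub>1)\<close> is at least the number of such legs.  Averaged over all
  subsets \<open>C\<close>, half of the \<open>2|Q|\<close> legs have differently coloured ends while \<open>|C|\<close> is at
  most \<open>|Q|/2\<close>, so some \<open>C\<close> gives \<open>d\<^sub>M\<^sub>P \<ge> |Q|/2\<close>.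
\<close>

lemma is_path_singleton [simp]: "is_path E [x]"
  by (simp add: is_path_def)

lemma is_path_Cons_Cons:
  "is_path E (x # y # rest) \<longleftrightarrow> {x,y} \<in> E \<and> x \<notin> set (y # rest) \<and> is_path E (y # rest)"
proof -
  have "(\<forall>i. Suc i < length (x # y # rest) \<longrightarrow> {(x # y # rest) ! i, (x # y # rest) ! Suc i} \<in> E)
      \<longleftrightarrow> {x,y} \<in> E \<and> (\<forall>i. Suc i < length (y # rest) \<longrightarrow> {(y # rest) ! i, (y # rest) ! Suc i} \<in> E)"
    (is "?L \<longleftrightarrow> ?R")
  proof
    assume ?L
    then show ?R by (metis Suc_less_eq length_Cons nth_Cons_0 nth_Cons_Suc zero_less_Suc)
  next
    assume ?R
    then show ?L by (auto simp: nth_Cons split: nat.splits)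
  qed
  then show ?thesis by (auto simp: is_path_def)
qed

lemma path_edges_singleton [simp]: "path_edges [x] = {}"
  by (simp add: path_edges_def)

lemma path_edges_Cons_Cons: "path_edges (x # y # rest) = insert {x,y} (path_edges (y # rest))"
proof (intro equalityI subsetI)
  fix e assume "e \<in> path_edges (x # y # rest)"
  then obtain i where "e = {(x#y#rest) ! i, (x#y#rest) ! Suc i}" "Suc i < length (x#y#rest)"
    by (auto simp: path_edges_def)
  then show "e \<in> insert {x,y} (path_edges (y # rest))"
    by (cases i) (auto simp: path_edges_def)
next
  fix e assume "e \<in> insert {x,y} (path_edges (y # rest))"
  then consider "e = {x,y}" | i where "e = {(y#rest) ! i, (y#rest) ! Suc i}" "Suc i < length (y#rest)"
    by (auto simp: path_edges_def)
  then show "e \<in> path_edges (x # y # rest)"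
  proof cases
    case 1
    then show ?thesis unfolding path_edges_def by (rule_tac CollectI, rule_tac x=0 in exI) auto
  next
    case (2 i)
    then show ?thesis unfolding path_edges_def by (rule_tac CollectI, rule_tac x="Suc i" in exI) auto
  qed
qed

lemma path_edges_subset: "is_path E p \<Longrightarrow> path_edges p \<subseteq> E"
  by (auto simp: is_path_def path_edges_def)

lemma path_edge_subset_set: "e \<in> path_edges p \<Longrightarrow> e \<subseteq> set p"
  by (auto simp: path_edges_def)

lemma nth_path_edge: "Suc i < length p \<Longrightarrow> {p ! i, p ! Suc i} \<in> path_edges p"
  by (auto simp: path_edges_def)

lemma path_edges_disjointI:
  assumes "set p \<inter> set p' = {}"
  shows "path_edges p \<inter> path_edges p' = {}"
proof -
  have "e \<noteq> {}" if "e \<in> path_edges p" for e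
    using that by (auto simp: path_edges_def)
  then show ?thesis using path_edge_subset_set assms by blast
qed

lemma is_path_snoc:
  "is_path E p \<Longrightarrow> v \<notin> set p \<Longrightarrow> {last p, v} \<in> E \<Longrightarrow> is_path E (p @ [v])"
proof (induction p rule: induct_list012)
  case (2 x)
  then show ?case by (simp add: is_path_Cons_Cons)
next
  case (3 x y zs)
  then show ?case by (auto simp: is_path_Cons_Cons)
qed (simp add: is_path_def)

lemma path_edges_snoc:
  "p \<noteq> [] \<Longrightarrow> path_edges (p @ [v]) = insert {last p, v} (path_edges p)"
  by (induction p rule: induct_list012) (auto simp: path_edges_Cons_Cons)

lemma is_path_prefix: "is_path E (xs @ ys) \<Longrightarrow> xs \<noteq> [] \<Longrightarrow> is_path E xs"
  by (induction xs rule: induct_list012) (auto simp: is_path_Cons_Cons)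

lemma list_change_point:
  "xs \<noteq> [] \<Longrightarrow> P (hd xs) \<Longrightarrow> \<not> P (last xs) \<Longrightarrow>
    \<exists>i. Suc i < length xs \<and> P (xs ! i) \<and> \<not> P (xs ! Suc i)"
proof (induction xs rule: induct_list012)
  case (3 x y zs)
  show ?case
  proof (cases "P y")
    case True
    with 3 obtain i where "Suc i < length (y # zs)" "P ((y#zs) ! i)" "\<not> P ((y#zs) ! Suc i)"
      by auto
    then show ?thesis by (rule_tac x="Suc i" in exI) auto
  next
    case False
    with 3 show ?thesis by (rule_tac x=0 in exI) auto
  qed
qed auto

lemma doubleton_eqI: "u \<in> {p,r} \<Longrightarrow> v \<in> {p,r} \<Longrightarrow> u \<noteq> v \<Longrightarrow> {u,v} = {p,r}"
  by auto

lemma two_classes_pairing_first_class: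
  assumes "distinct [x,y,z,w]" and "{x,y,z,w} = {a,b,c,d}"
    and "P a = P b" "P c = P d" "P a \<noteq> P c" "P x = P y" "P x = P a"
  shows "{x,y} = {a,b} \<and> {z,w} = {c,d}"
proof -
  have mem: "x \<in> {a,b,c,d}" "y \<in> {a,b,c,d}" "z \<in> {a,b,c,d}" "w \<in> {a,b,c,d}"
    using assms(2) by blast+
  then have "x \<in> {a,b}" "y \<in> {a,b}" using assms(3-7) by fastforce+
  then have xy: "{x,y} = {a,b}" using assms(1) by (intro doubleton_eqI) auto
  then have "z \<notin> {a,b}" "w \<notin> {a,b}" using assms(1) by auto
  then have "{z,w} = {c,d}" using mem assms(1) by (intro doubleton_eqI) auto
  with xy show ?thesis ..
qed

lemma two_classes_pairing:
  assumes dist: "distinct [x,y,z,w]" and q: "{x,y,z,w} = {a,b,c,d}"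
    and P: "P a = P b" "P c = P d" "P a \<noteq> P c" and "P x = P y"
  shows "{{x,y},{z,w}} = {{a,b},{c,d}}"
proof -
  have "x \<in> {a,b,c,d}" using q by blast
  then consider "P x = P a" | "P x = P c" using P by auto
  then show ?thesis
  proof cases
    case 1
    then show ?thesis using two_classes_pairing_first_class[OF dist q P \<open>P x = P y\<close>] by simp
  next
    case 2
    have q': "{x,y,z,w} = {c,d,a,b}" using q by blast
    have "{{x,y},{z,w}} = {{c,d},{a,b}}"
      using two_classes_pairing_first_class[OF dist q' P(2,1) _ \<open>P x = P y\<close> 2] P(3) by simp
    then show ?thesis by (simp add: insert_commute)
  qed
qed

lemma other_pairing_crosses_split:
  assumes "card {a,b,c,d} = 4" and q: "{x,y,z,w} = {a,b,c,d}"
    and P: "P a = P b" "P c = P d" "P a \<noteq> P c"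
    and ne: "{{a,b},{c,d}} \<noteq> {{x,y},{z,w}}"
  shows "P x \<noteq> P y \<and> P z \<noteq> P w"
proof -
  have "card {x,y,z,w} = 4" using assms(1) q by simp
  then have dist: "distinct [x,y,z,w]" by (auto simp: card_insert_if split: if_splits)
  have "P x \<noteq> P y" using two_classes_pairing[OF dist q P] ne by metis
  moreover have "P z \<noteq> P w"
  proof
    assume "P z = P w"
    have "{{z,w},{x,y}} = {{a,b},{c,d}}"
    proof (rule two_classes_pairing[of z w x y a b c d P])
      show "distinct [z,w,x,y]" using dist by auto
      show "{z,w,x,y} = {a,b,c,d}" using q by blast
    qed (use P \<open>P z = P w\<close> in auto)
    then show False using ne by (simp add: insert_commute)
  qed
  ultimately show ?thesis ..
qed

lemma sum_if_minus_one_one: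
  assumes "finite A"
  shows "(\<Sum>x\<in>A. if P x then -1 else (1::int)) = int (card A) - 2 * int (card {x\<in>A. P x})"
proof -
  have "(\<Sum>x\<in>A. if P x then -1 else (1::int)) = (\<Sum>x\<in>A. 1 - 2 * (if P x then 1 else 0))"
    by (rule sum.cong) auto
  also have "\<dots> = int (card A) - 2 * (\<Sum>x\<in>A. if P x then 1 else 0)"
    by (simp add: sum_subtractf sum_distrib_left)
  also have "(\<Sum>x\<in>A. if P x then 1 else 0) = (\<Sum>x\<in>{x\<in>A. P x}. 1::int)"
    by (rule sum.inter_filter[OF assms, symmetric])
  finally show ?thesis by simp
qed

locale tree =
  fixes V :: "'v set" and E :: "'v set set" and X :: "'v set"
  assumes tree_on: "is_tree_on V E X"
begin

lemma finite_V: "finite V" and V_ne: "V \<noteq> {}"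
  and edge_form: "e \<in> E \<Longrightarrow> \<exists>u v. u \<in> V \<and> v \<in> V \<and> u \<noteq> v \<and> e = {u, v}"
  and path_unique: "u \<in> V \<Longrightarrow> v \<in> V \<Longrightarrow> \<exists>!p. is_path E p \<and> hd p = u \<and> last p = v"
  and leaves_eq: "X = {v \<in> V. deg E v \<le> 1}"
  and deg_internal: "v \<in> V - X \<Longrightarrow> deg E v \<le> 3"
  using tree_on unfolding is_tree_on_def by blast+

lemma edge_vertices: "{x, y} \<in> E \<Longrightarrow> x \<in> V \<and> y \<in> V \<and> x \<noteq> y"
  using edge_form[of "{x,y}"] by (auto simp: doubleton_eq_iff)

lemma finite_E: "finite E"
proof -
  have "E \<subseteq> Pow V" using edge_form by blast
  then show ?thesis using finite_V by (meson finite_Pow_iff finite_subset)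
qed

lemma leaves_subset: "X \<subseteq> V"
  using leaves_eq by auto

lemma tpath_spec: "u \<in> V \<Longrightarrow> v \<in> V \<Longrightarrow> is_path E (tpath E u v) \<and> hd (tpath E u v) = u \<and> last (tpath E u v) = v"
  unfolding tpath_def by (rule theI') (rule path_unique)

lemma tpath_eqI:
  "u \<in> V \<Longrightarrow> v \<in> V \<Longrightarrow> is_path E p \<Longrightarrow> hd p = u \<Longrightarrow> last p = v \<Longrightarrow> tpath E u v = p"
  using path_unique[of u v] tpath_spec[of u v] by blast

lemma ends_in_tpath: "u \<in> V \<Longrightarrow> v \<in> V \<Longrightarrow> u \<in> set (tpath E u v) \<and> v \<in> set (tpath E u v)"
  using tpath_spec[of u v] by (metis is_path_def last_in_set list.set_sel(1))

lemma tpath_edges_subset: "u \<in> V \<Longrightarrow> v \<in> V \<Longrightarrow> path_edges (tpath E u v) \<subseteq> E"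
  using tpath_spec path_edges_subset by blast

definition root :: 'v where "root = (SOME r. r \<in> V)"

lemma root_in_V: "root \<in> V"
  unfolding root_def using V_ne by (simp add: some_in_eq)

text \<open>Removing an edge \<open>e\<close> leaves two components; \<open>side e\<close> tells them apart, the root's
  component being \<open>False\<close>.\<close>
definition side :: "'v set \<Rightarrow> 'v \<Rightarrow> bool" where
  "side e x \<longleftrightarrow> e \<in> path_edges (tpath E root x)"

lemma side_in_E: "x \<in> V \<Longrightarrow> side e x \<Longrightarrow> e \<in> E"
  unfolding side_def using tpath_edges_subset[OF root_in_V] by blast

lemma side_neq_adjacent_iff_away_from_root:
  assumes e: "{u,v} \<in> E" and nv: "v \<notin> set (tpath E root u)"
  shows "side e' u \<noteq> side e' v \<longleftrightarrow> e' = {u,v}"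
proof -
  have uv: "u \<in> V" "v \<in> V" using edge_vertices[OF e] by auto
  let ?p = "tpath E root u"
  have p: "is_path E ?p" "hd ?p = root" "last ?p = u" using tpath_spec[OF root_in_V uv(1)] by auto
  have ne: "?p \<noteq> []" using p(1) by (simp add: is_path_def)
  have "tpath E root v = ?p @ [v]"
    by (rule tpath_eqI[OF root_in_V uv(2) is_path_snoc[OF p(1) nv]]) (use ne p e in auto)
  then have "path_edges (tpath E root v) = insert {u,v} (path_edges ?p)"
    using path_edges_snoc[OF ne] p(3) by simp
  moreover have "{u,v} \<notin> path_edges ?p" using path_edge_subset_set nv by blast
  ultimately show ?thesis unfolding side_def by auto
qed

lemma side_neq_adjacent_iff:
  assumes e: "{u,v} \<in> E"
  shows "side e' u \<noteq> side e' v \<longleftrightarrow> e' = {u,v}"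
proof (cases "v \<in> set (tpath E root u)")
  case False
  then show ?thesis using side_neq_adjacent_iff_away_from_root[OF e] by blast
next
  case True
  have uv: "u \<in> V" "v \<in> V" using edge_vertices[OF e] by auto
  let ?p = "tpath E root u"
  have p: "is_path E ?p" "hd ?p = root" "last ?p = u" using tpath_spec[OF root_in_V uv(1)] by auto
  obtain xs ys where split: "?p = xs @ v # ys" using True split_list by metis
  have "tpath E root v = xs @ [v]"
    by (rule tpath_eqI[OF root_in_V uv(2) is_path_prefix[of E "xs @ [v]" ys]])
      (use p split in \<open>auto simp: hd_append split: if_splits\<close>)
  moreover have "u \<in> set (v # ys)" "distinct (xs @ v # ys)"
    using p(1,3) split by (metis last_ConsL last_appendR last_in_set list.discI, simp add: is_path_def)
  ultimately have "u \<notin> set (tpath E root v)" using uv edge_vertices[OF e] by auto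
  then show ?thesis using side_neq_adjacent_iff_away_from_root[of v u] e by (auto simp: insert_commute)
qed

lemma mem_path_edges_iff_side:
  assumes "is_path E p" "hd p \<in> V"
  shows "e \<in> path_edges p \<longleftrightarrow> side e (hd p) \<noteq> side e (last p)"
  using assms
proof (induction p rule: induct_list012)
  case (3 x y zs)
  have xy: "{x,y} \<in> E" "x \<notin> set (y # zs)" "is_path E (y # zs)"
    using "3.prems"(1) by (auto simp: is_path_Cons_Cons)
  have "e \<in> path_edges (y # zs) \<longleftrightarrow> side e y \<noteq> side e (last (y # zs))"
    using "3.IH"(2)[OF xy(3)] edge_vertices[OF xy(1)] by simp
  moreover have "{x,y} \<notin> path_edges (y # zs)" using path_edge_subset_set xy(2) by blast
  ultimately show ?case
    using side_neq_adjacent_iff[OF xy(1), of e] by (auto simp: path_edges_Cons_Cons)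
qed (auto simp: is_path_def)

lemma side_eq_on_path:
  assumes "is_path E p" "hd p \<in> V" "e \<notin> path_edges p" "x \<in> set p"
  shows "side e x = side e (hd p)"
proof -
  obtain xs ys where split: "p = xs @ x # ys" using assms(4) split_list by metis
  have pre: "is_path E (xs @ [x])" using is_path_prefix[of E "xs @ [x]" ys] assms(1) split by simp
  have "path_edges (xs @ [x]) \<subseteq> path_edges p"
    unfolding split path_edges_def by (auto simp: nth_append)
  then show ?thesis
    using mem_path_edges_iff_side[OF pre] assms(2,3) split by (auto simp: hd_append split: if_splits)
qed

lemma mem_tpath_edges_iff:
  "u \<in> V \<Longrightarrow> v \<in> V \<Longrightarrow> e \<in> path_edges (tpath E u v) \<longleftrightarrow> side e u \<noteq> side e v"
  using mem_path_edges_iff_side[of "tpath E u v" e] tpath_spec[of u v] by simp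

definition splits :: "'v set \<Rightarrow> 'v \<Rightarrow> 'v \<Rightarrow> 'v \<Rightarrow> 'v \<Rightarrow> bool" where
  "splits e a b c d \<longleftrightarrow> side e a = side e b \<and> side e c = side e d \<and> side e a \<noteq> side e c"

lemma disjoint_tpaths_iff_splits:
  assumes V: "a \<in> V" "b \<in> V" "c \<in> V" "d \<in> V"
  shows "set (tpath E a b) \<inter> set (tpath E c d) = {} \<longleftrightarrow> (\<exists>e. splits e a b c d)"
proof
  let ?p = "tpath E a c" and ?S = "set (tpath E a b)"
  assume disj: "?S \<inter> set (tpath E c d) = {}"
  have p: "is_path E ?p" "hd ?p = a" "last ?p = c" using tpath_spec V by auto
  have "a \<in> ?S" "c \<notin> ?S" using ends_in_tpath V disj by blast+
  then obtain i where i: "Suc i < length ?p" "?p ! i \<in> ?S" "?p ! Suc i \<notin> ?S"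
    using list_change_point[of ?p "\<lambda>x. x \<in> ?S"] p by (auto simp: is_path_def)
  let ?e = "{?p ! i, ?p ! Suc i}"
  have "?e \<in> path_edges ?p" using nth_path_edge[OF i(1)] .
  moreover have "?e \<notin> path_edges (tpath E a b)" using path_edge_subset_set i(3) by blast
  moreover have "?e \<notin> path_edges (tpath E c d)" using path_edge_subset_set i(2) disj by blast
  ultimately have "splits ?e a b c d"
    unfolding splits_def using mem_tpath_edges_iff V by metis
  then show "\<exists>e. splits e a b c d" ..
next
  assume "\<exists>e. splits e a b c d"
  then obtain e where s: "side e a = side e b" "side e c = side e d" "side e a \<noteq> side e c"
    unfolding splits_def by blast
  show "set (tpath E a b) \<inter> set (tpath E c d) = {}"
  proof (rule ccontr)
    assume "set (tpath E a b) \<inter> set (tpath E c d) \<noteq> {}"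
    then obtain x where x: "x \<in> set (tpath E a b)" "x \<in> set (tpath E c d)" by blast
    have "side e x = side e a"
      using side_eq_on_path[of "tpath E a b" e x] tpath_spec[of a b] mem_tpath_edges_iff[of a b] V s x
      by simp
    moreover have "side e x = side e c"
      using side_eq_on_path[of "tpath E c d" e x] tpath_spec[of c d] mem_tpath_edges_iff[of c d] V s x
      by simp
    ultimately show False using s by simp
  qed
qed

lemma quartet_top_eq_singleton:
  assumes V: "a \<in> V" "b \<in> V" "c \<in> V" "d \<in> V" and q: "q = {a,b,c,d}" "card q = 4"
    and disj: "set (tpath E a b) \<inter> set (tpath E c d) = {}"
  shows "quartet_top E q = {{{a,b},{c,d}}}"
proof (intro equalityI subsetI)
  fix s assume "s \<in> quartet_top E q"
  then obtain x y z w where s: "s = {{x,y},{z,w}}" "{x,y,z,w} = {a,b,c,d}"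
    and disj': "set (tpath E x y) \<inter> set (tpath E z w) = {}"
    unfolding quartet_top_def q by blast
  have "{x,y,z,w} \<subseteq> V" using s(2) V by simp
  then have xV: "x \<in> V" "y \<in> V" "z \<in> V" "w \<in> V" by simp_all
  show "s \<in> {{{a,b},{c,d}}}"
  proof (rule ccontr)
    assume "s \<notin> {{{a,b},{c,d}}}"
    then have ne: "{{a,b},{c,d}} \<noteq> {{x,y},{z,w}}" using s(1) by simp
    obtain e where "splits e a b c d" using disjoint_tpaths_iff_splits V disj by blast
    then have "side e x \<noteq> side e y \<and> side e z \<noteq> side e w"
      using other_pairing_crosses_split[OF _ s(2) _ _ _ ne, of "side e"] q
      unfolding splits_def by blast
    then have "e \<in> path_edges (tpath E x y) \<inter> path_edges (tpath E z w)"
      using mem_tpath_edges_iff xV by simp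
    then show False using path_edges_disjointI[OF disj'] by blast
  qed
next
  fix s assume "s \<in> {{{a,b},{c,d}}}"
  then show "s \<in> quartet_top E q" using q disj unfolding quartet_top_def by blast
qed

definition separating_edges :: "'v \<Rightarrow> 'v \<Rightarrow> 'v set set" where
  "separating_edges w x = {e\<in>E. side e w \<noteq> side e x}"

lemma card_separating_edges_adjacent:
  assumes f: "{w,w'} \<in> E"
  shows "int (card (separating_edges w' x)) =
    int (card (separating_edges w x)) + (if {w,w'} \<in> separating_edges w x then -1 else 1)"
proof -
  have fin: "finite (separating_edges w x)"
    unfolding separating_edges_def using finite_E by simp
  have "side e w' = (if e = {w,w'} then \<not> side e w else side e w)" for e
    using side_neq_adjacent_iff[OF f, of e] by metis
  then have eq: "separating_edges w' x = (if {w,w'} \<in> separating_edges w x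
      then separating_edges w x - {{w,w'}} else insert {w,w'} (separating_edges w x))"
    unfolding separating_edges_def using f by auto
  show ?thesis
  proof (cases "{w,w'} \<in> separating_edges w x")
    case True
    then have "card (separating_edges w x) > 0" using fin card_gt_0_iff by blast
    then show ?thesis using True eq fin by (simp add: card_Diff_singleton of_nat_diff)
  next
    case False
    then show ?thesis using eq fin by simp
  qed
qed

lemma first_edge_of_tpath:
  assumes "w \<in> V" "x \<in> V" "w \<noteq> x"
  shows "\<exists>w'. {w,w'} \<in> path_edges (tpath E w x)"
proof -
  have p: "tpath E w x \<noteq> []" "hd (tpath E w x) = w" "last (tpath E w x) = x"
    using tpath_spec assms by (auto simp: is_path_def)
  then obtain ys where ys: "tpath E w x = w # ys" by (metis list.collapse)
  then obtain w' rest where "ys = w' # rest" using p(3) assms(3) by (cases ys) auto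
  then show ?thesis using ys by (auto simp: path_edges_Cons_Cons)
qed

text \<open>
  \<open>card (separating_edges w x)\<close> is the distance from \<open>w\<close> to \<open>x\<close>.  A vertex minimising the
  total distance to a finite vertex set \<open>q\<close> is a centroid of \<open>q\<close>:
  if more than half of \<open>q\<close> lay beyond an edge, stepping across the first edge towards them
  would decrease the total distance.
\<close>
lemma far_side_le_half_at_minimum:
  assumes q: "finite q" "q \<subseteq> V" and w: "w \<in> V"
    and min: "\<And>v. v \<in> V \<Longrightarrow> (\<Sum>x\<in>q. card (separating_edges w x)) \<le> (\<Sum>x\<in>q. card (separating_edges v x))"
    and e: "e \<in> E"
  shows "2 * card {x\<in>q. side e x \<noteq> side e w} \<le> card q"
proof (rule ccontr)
  let ?F = "{x\<in>q. side e x \<noteq> side e w}"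
  assume "\<not> ?thesis"
  then have big: "2 * card ?F > card q" by simp
  then have "?F \<noteq> {}" by (metis card.empty mult_0_right not_less_zero)
  then obtain x0 where x0: "x0 \<in> q" "side e x0 \<noteq> side e w" by blast
  have x0V: "x0 \<in> V" using x0 q by blast
  obtain w' where f: "{w,w'} \<in> path_edges (tpath E w x0)"
    using first_edge_of_tpath[OF w x0V] x0(2) by blast
  have fE: "{w,w'} \<in> E" using f tpath_edges_subset[OF w x0V] by blast
  have "?F \<subseteq> {x\<in>q. {w,w'} \<in> separating_edges w x}"
  proof
    fix x assume "x \<in> ?F"
    then have x: "x \<in> q" "x \<in> V" "side e x = side e x0" using q x0 by auto
    have "{w,w'} \<in> path_edges (tpath E w x)"
    proof (rule ccontr)
      assume "{w,w'} \<notin> path_edges (tpath E w x)"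
      then have "{w,w'} \<in> path_edges (tpath E x0 x)" using f mem_tpath_edges_iff w x0V x by simp
      then have "w \<in> set (tpath E x0 x)" using path_edge_subset_set by blast
      moreover have "e \<notin> path_edges (tpath E x0 x)" using mem_tpath_edges_iff x0V x by simp
      ultimately have "side e w = side e x0"
        using side_eq_on_path[of "tpath E x0 x" e w] tpath_spec[OF x0V x(2)] x0V by simp
      then show False using x0(2) by simp
    qed
    then show "x \<in> {x\<in>q. {w,w'} \<in> separating_edges w x}"
      using x fE mem_tpath_edges_iff w unfolding separating_edges_def by simp
  qed
  then have "card ?F \<le> card {x\<in>q. {w,w'} \<in> separating_edges w x}"
    using q by (simp add: card_mono)
  moreover have "int (\<Sum>x\<in>q. card (separating_edges w' x)) =
      int (\<Sum>x\<in>q. card (separating_edges w x)) + (int (card q) - 2 * int (card {x\<in>q. {w,w'} \<in> separating_edges w x}))"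
    using card_separating_edges_adjacent[OF fE] sum_if_minus_one_one[OF q(1)]
    by (simp add: sum.distrib)
  moreover have "w' \<in> V" using edge_vertices[OF fE] by simp
  ultimately show False using min[of w'] big by linarith
qed

lemma card_le_deg_if_far_sides_le_1:
  assumes w: "w \<in> V" and A: "A \<subseteq> V" "finite A"
    and far: "\<And>e. e \<in> E \<Longrightarrow> card {x\<in>A. side e x \<noteq> side e w} \<le> 1"
  shows "card (A - {w}) \<le> deg E w"
proof -
  have "\<forall>x\<in>A - {w}. \<exists>f. f \<in> E \<and> w \<in> f \<and> side f x \<noteq> side f w"
  proof
    fix x assume x: "x \<in> A - {w}"
    then have xV: "x \<in> V" using A by blast
    obtain w' where "{w,w'} \<in> path_edges (tpath E w x)"
      using first_edge_of_tpath[OF w xV] x by blast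
    then show "\<exists>f. f \<in> E \<and> w \<in> f \<and> side f x \<noteq> side f w"
      using mem_tpath_edges_iff[OF w xV] tpath_edges_subset[OF w xV] by blast
  qed
  then obtain F where F: "\<And>x. x \<in> A - {w} \<Longrightarrow> F x \<in> E \<and> w \<in> F x \<and> side (F x) x \<noteq> side (F x) w"
    by metis
  have "inj_on F (A - {w})"
  proof (rule inj_onI)
    fix x y assume xy: "x \<in> A - {w}" "y \<in> A - {w}" "F x = F y"
    then have "{x, y} \<subseteq> {z\<in>A. side (F x) z \<noteq> side (F x) w}"
      using F[OF xy(1)] F[OF xy(2)] by auto
    moreover have "card {z\<in>A. side (F x) z \<noteq> side (F x) w} \<le> 1" using far F xy(1) by blast
    ultimately show "x = y" using A(2) card_le_Suc0_iff_eq[of "{z\<in>A. side (F x) z \<noteq> side (F x) w}"]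
      by auto
  qed
  moreover have "F ` (A - {w}) \<subseteq> {e\<in>E. w \<in> e}" using F by blast
  ultimately show ?thesis
    unfolding deg_def using finite_E by (simp add: card_inj_on_le)
qed

lemma exists_balanced_edge:
  assumes qX: "q \<subseteq> X" and c4: "card q = 4"
  shows "\<exists>e\<in>E. card {x\<in>q. side e x} = 2"
proof (rule ccontr)
  assume unbalanced: "\<not> ?thesis"
  have fin: "finite q" using c4 card_ge_0_finite by force
  have qV: "q \<subseteq> V" using qX leaves_subset by blast
  obtain w where w: "w \<in> V"
    and min: "\<And>v. v \<in> V \<Longrightarrow> (\<Sum>x\<in>q. card (separating_edges w x)) \<le> (\<Sum>x\<in>q. card (separating_edges v x))"
    using ex_has_least_nat[of "\<lambda>w. w \<in> V" root "\<lambda>w. \<Sum>x\<in>q. card (separating_edges w x)"] root_in_V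
    by blast
  have "card {x\<in>q. side e x \<noteq> side e w} \<le> 1" if e: "e \<in> E" for e
  proof -
    have "{x\<in>q. side e x \<noteq> side e w} = (if side e w then q - {x\<in>q. side e x} else {x\<in>q. side e x})"
      by auto
    then have "card {x\<in>q. side e x \<noteq> side e w} \<noteq> 2"
      using unbalanced e c4 fin by (auto simp: card_Diff_subset)
    then show ?thesis using far_side_le_half_at_minimum[OF fin qV w min e] c4 by linarith
  qed
  then have "card (q - {w}) \<le> deg E w" using card_le_deg_if_far_sides_le_1[OF w qV fin] by blast
  moreover have "card (q - {w}) \<ge> 3" using c4 fin card_Diff_singleton_if[of q w] by simp
  moreover have "w \<in> X \<Longrightarrow> deg E w \<le> 1" using leaves_eq by blast
  moreover have "w \<notin> X \<Longrightarrow> card (q - {w}) = 4 \<and> deg E w \<le> 3"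
  proof -
    assume "w \<notin> X"
    then have "q - {w} = q" using qX by blast
    then show ?thesis using c4 deg_internal w \<open>w \<notin> X\<close> by simp
  qed
  ultimately show False by linarith
qed

lemma quartet_resolved:
  assumes qX: "q \<subseteq> X" and c4: "card q = 4"
  shows "\<exists>a b c d. q = {a,b,c,d} \<and> set (tpath E a b) \<inter> set (tpath E c d) = {} \<and>
    quartet_top E q = {{{a,b},{c,d}}}"
proof -
  have fin: "finite q" using c4 card_ge_0_finite by force
  obtain e where e: "card {x\<in>q. side e x} = 2" using exists_balanced_edge[OF qX c4] by blast
  then obtain a b where ab: "{x\<in>q. side e x} = {a,b}" by (meson card_2_iff)
  have "card (q - {x\<in>q. side e x}) = 2" using e c4 fin by (simp add: card_Diff_subset)
  then obtain c d where cd: "q - {x\<in>q. side e x} = {c,d}" by (meson card_2_iff)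
  have q: "q = {a,b,c,d}" using ab cd by blast
  have V: "a \<in> V" "b \<in> V" "c \<in> V" "d \<in> V" using q qX leaves_subset by auto
  have "splits e a b c d" using ab cd unfolding splits_def by blast
  then have disj: "set (tpath E a b) \<inter> set (tpath E c d) = {}"
    using disjoint_tpaths_iff_splits[OF V] by blast
  show ?thesis using quartet_top_eq_singleton[OF V q c4 disj] q disj by blast
qed

end

locale two_trees = T1: tree V1 E1 X + T2: tree V2 E2 X
  for V1 :: "'v set" and E1 V2 E2 X
begin

lemma incompatible_quartet_crossing_edge:
  assumes qX: "q \<subseteq> X" and c4: "card q = 4" and inc: "incompatible E1 E2 q"
  shows "\<exists>a b c d e. q = {a,b,c,d} \<and> {{a,b},{c,d}} \<in> quartet_top E1 q \<and>
    set (tpath E1 a b) \<inter> set (tpath E1 c d) = {} \<and>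
    e \<in> E2 \<and> T2.side e a \<noteq> T2.side e b \<and> T2.side e c \<noteq> T2.side e d"
proof -
  obtain a b c d where q: "q = {a,b,c,d}" and disj: "set (tpath E1 a b) \<inter> set (tpath E1 c d) = {}"
    and top1: "quartet_top E1 q = {{{a,b},{c,d}}}"
    using T1.quartet_resolved[OF qX c4] by blast
  obtain x y z w where q': "q = {x,y,z,w}" and disj': "set (tpath E2 x y) \<inter> set (tpath E2 z w) = {}"
    and top2: "quartet_top E2 q = {{{x,y},{z,w}}}"
    using T2.quartet_resolved[OF qX c4] by blast
  have q'': "{a,b,c,d} = {x,y,z,w}" and c4': "card {x,y,z,w} = 4"
    using q' c4 unfolding q by simp_all
  have "{x,y,z,w} \<subseteq> V2" "{a,b,c,d} \<subseteq> V2" using q' q qX T2.leaves_subset by auto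
  then have V2: "x \<in> V2" "y \<in> V2" "z \<in> V2" "w \<in> V2" "a \<in> V2" "b \<in> V2" by simp_all
  obtain e where "T2.splits e x y z w" using T2.disjoint_tpaths_iff_splits V2 disj' by blast
  then have e: "T2.side e x = T2.side e y" "T2.side e z = T2.side e w" "T2.side e x \<noteq> T2.side e z"
    unfolding T2.splits_def by blast+
  have "{{x,y},{z,w}} \<noteq> {{a,b},{c,d}}" using inc top1 top2 unfolding incompatible_def by auto
  then have cross: "T2.side e a \<noteq> T2.side e b \<and> T2.side e c \<noteq> T2.side e d"
    by (rule other_pairing_crosses_split[of x y z w a b c d, OF c4' q'' e])
  then have "e \<in> E2" using T2.side_in_E V2(5,6) by blast
  then show ?thesis using q disj top1 cross by blast
qed

end

lemma card_filter_mod_2_neq_iff: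
  assumes "finite C"
  shows "card {e\<in>C. P e} mod 2 \<noteq> card {e\<in>C. Q e} mod 2 \<longleftrightarrow> odd (card {e\<in>C. P e \<noteq> Q e})"
proof -
  let ?PQ = "{e\<in>C. P e \<and> Q e}" and ?P = "{e\<in>C. P e \<and> \<not> Q e}" and ?Q = "{e\<in>C. \<not> P e \<and> Q e}"
  have "{e\<in>C. P e} = ?P \<union> ?PQ" "{e\<in>C. Q e} = ?Q \<union> ?PQ" "{e\<in>C. P e \<noteq> Q e} = ?P \<union> ?Q"
    by auto
  moreover have "card (?P \<union> ?PQ) = card ?P + card ?PQ" "card (?Q \<union> ?PQ) = card ?Q + card ?PQ"
    "card (?P \<union> ?Q) = card ?P + card ?Q"
    by (rule card_Un_disjoint; use assms in auto)+
  ultimately have "card {e\<in>C. P e} = card ?P + card ?PQ" "card {e\<in>C. Q e} = card ?Q + card ?PQ"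
    "card {e\<in>C. P e \<noteq> Q e} = card ?P + card ?Q"
    by simp_all
  then show ?thesis by presburger
qed

context tree
begin

definition parity_character :: "'v set set \<Rightarrow> 'v \<Rightarrow> nat" where
  "parity_character C x = card {e\<in>C. side e x} mod 2"

lemma parity_character_less_2: "parity_character C x < 2"
  unfolding parity_character_def by simp

lemma parity_character_neq_iff:
  "finite C \<Longrightarrow> parity_character C x \<noteq> parity_character C y \<longleftrightarrow> odd (card {e\<in>C. side e x \<noteq> side e y})"
  unfolding parity_character_def by (rule card_filter_mod_2_neq_iff)

lemma changes_parity_character_le:
  assumes "C \<subseteq> E"
  shows "changes E (parity_character C) \<le> card C"
proof -
  have fin: "finite C" using assms finite_E finite_subset by blast
  have "{u,v} \<in> C" if e: "{u,v} \<in> E" "parity_character C u \<noteq> parity_character C v" for u v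
  proof -
    have "odd (card {e'\<in>C. side e' u \<noteq> side e' v})"
      using e(2) parity_character_neq_iff[OF fin] by blast
    then have "{e'\<in>C. side e' u \<noteq> side e' v} \<noteq> {}" by (rule odd_card_imp_not_empty)
    then obtain e' where "e' \<in> C" "side e' u \<noteq> side e' v" by blast
    then show ?thesis using side_neq_adjacent_iff[OF e(1), of e'] by simp
  qed
  then have "{e\<in>E. \<exists>u v. e = {u,v} \<and> parity_character C u \<noteq> parity_character C v} \<subseteq> C"
    by blast
  then show ?thesis unfolding changes_def using fin by (simp add: card_mono)
qed

lemma pscore_le_changes:
  "(\<forall>x\<in>X. g x = f x) \<Longrightarrow> (\<forall>v\<in>V. g v \<in> S) \<Longrightarrow> pscore V E X S f \<le> changes E g"
  unfolding pscore_def by (rule Least_le) blast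

lemma pscore_attained:
  assumes "s \<in> S" "\<forall>x\<in>X. f x \<in> S"
  shows "\<exists>g. (\<forall>x\<in>X. g x = f x) \<and> (\<forall>v\<in>V. g v \<in> S) \<and> changes E g = pscore V E X S f"
proof -
  let ?g = "\<lambda>v. if v \<in> X then f v else s"
  have "\<exists>k g. (\<forall>x\<in>X. g x = f x) \<and> (\<forall>v\<in>V. g v \<in> S) \<and> changes E g = k"
    using assms by (intro exI[of _ "changes E ?g"] exI[of _ ?g]) auto
  then show ?thesis unfolding pscore_def by (rule LeastI_ex)
qed

lemma pscore_le_card_edges:
  assumes "s \<in> S" "\<forall>x\<in>X. f x \<in> S"
  shows "pscore V E X S f \<le> card E"
proof -
  obtain g where "changes E g = pscore V E X S f" using pscore_attained[OF assms] by blast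
  moreover have "changes E g \<le> card E" unfolding changes_def using finite_E by (simp add: card_mono)
  ultimately show ?thesis by simp
qed

lemma card_disagreeing_pairs_le_changes:
  assumes K: "finite K" and uv: "\<And>k. k \<in> K \<Longrightarrow> u k \<in> V \<and> v k \<in> V"
    and disj: "\<And>k k'. k \<in> K \<Longrightarrow> k' \<in> K \<Longrightarrow> k \<noteq> k' \<Longrightarrow>
        path_edges (tpath E (u k) (v k)) \<inter> path_edges (tpath E (u k') (v k')) = {}"
  shows "card {k\<in>K. g (u k) \<noteq> g (v k)} \<le> changes E g"
proof -
  define Ch where "Ch = {e\<in>E. \<exists>x y. e = {x,y} \<and> g x \<noteq> g y}"
  define B where "B = {k\<in>K. g (u k) \<noteq> g (v k)}"
  define L where "L k = path_edges (tpath E (u k) (v k)) \<inter> Ch" for k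
  have finL: "finite (L k)" for k unfolding L_def Ch_def using finite_E by simp
  have "L k \<noteq> {}" if k: "k \<in> B" for k
  proof -
    let ?p = "tpath E (u k) (v k)"
    have "k \<in> K" and neq: "g (u k) \<noteq> g (v k)" using k unfolding B_def by auto
    then have p: "is_path E ?p" "hd ?p = u k" "last ?p = v k" using tpath_spec uv by auto
    then obtain i where i: "Suc i < length ?p" "g (?p ! i) = g (u k)" "g (?p ! Suc i) \<noteq> g (u k)"
      using list_change_point[of ?p "\<lambda>x. g x = g (u k)"] neq by (auto simp: is_path_def)
    have edge: "{?p ! i, ?p ! Suc i} \<in> path_edges ?p" using nth_path_edge[OF i(1)] .
    then have "{?p ! i, ?p ! Suc i} \<in> E" using path_edges_subset[OF p(1)] by blast
    moreover have "g (?p ! i) \<noteq> g (?p ! Suc i)" using i(2,3) by simp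
    ultimately have "{?p ! i, ?p ! Suc i} \<in> Ch" unfolding Ch_def by blast
    with edge show ?thesis unfolding L_def by blast
  qed
  then have "(\<Sum>k\<in>B. 1) \<le> (\<Sum>k\<in>B. card (L k))"
    using finL by (intro sum_mono) (simp add: Suc_le_eq card_gt_0_iff)
  then have "card B \<le> (\<Sum>k\<in>B. card (L k))" by simp
  also have "\<dots> = card (\<Union>k\<in>B. L k)"
  proof (rule card_UN_disjoint[symmetric])
    show "finite B" using K unfolding B_def by simp
    show "\<forall>k\<in>B. finite (L k)" using finL by simp
    show "\<forall>k\<in>B. \<forall>k'\<in>B. k \<noteq> k' \<longrightarrow> L k \<inter> L k' = {}"
      using disj unfolding L_def B_def by blast
  qed
  also have "\<dots> \<le> card Ch"
    unfolding L_def Ch_def using finite_E by (intro card_mono) auto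
  finally show ?thesis unfolding B_def Ch_def changes_def .
qed

text \<open>Each differently coloured pair forces a change on its own path, and these paths
  share no edge.\<close>
lemma card_disagreeing_pairs_le_pscore:
  assumes "s \<in> S" "\<forall>x\<in>X. f x \<in> S" and K: "finite K" and uv: "\<And>k. k \<in> K \<Longrightarrow> u k \<in> X \<and> v k \<in> X"
    and disj: "\<And>k k'. k \<in> K \<Longrightarrow> k' \<in> K \<Longrightarrow> k \<noteq> k' \<Longrightarrow>
        path_edges (tpath E (u k) (v k)) \<inter> path_edges (tpath E (u k') (v k')) = {}"
  shows "card {k\<in>K. f (u k) \<noteq> f (v k)} \<le> pscore V E X S f"
proof -
  obtain g where g: "\<forall>x\<in>X. g x = f x" "changes E g = pscore V E X S f"
    using pscore_attained[OF assms(1,2)] by blast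
  have uvV: "u k \<in> V \<and> v k \<in> V" if "k \<in> K" for k using uv[OF that] leaves_subset by blast
  have "{k\<in>K. f (u k) \<noteq> f (v k)} = {k\<in>K. g (u k) \<noteq> g (v k)}" using g(1) uv by auto
  also have "card \<dots> \<le> changes E g" by (rule card_disagreeing_pairs_le_changes[OF K uvV disj])
  finally show ?thesis using g(2) by simp
qed

end

lemma tpath_edges_subset_leg_edges:
  "{{a,b},{c,d}} \<in> quartet_top E q \<Longrightarrow>
    path_edges (tpath E a b) \<union> path_edges (tpath E c d) \<subseteq> leg_edges E q"
  unfolding leg_edges_def by blast

lemma less_2_in_states:
  assumes "t \<ge> (2::enat)" "n < 2"
  shows "n \<in> states t"
proof -
  have "enat n < enat 2" using assms(2) by simp
  also have "enat 2 \<le> t" using assms(1) by (simp add: numeral_eq_enat)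
  finally show ?thesis unfolding states_def by simp
qed

context two_trees
begin

lemma abs_pscore_diff_le_dMP:
  assumes "0 \<in> states t" "\<forall>x\<in>X. f x \<in> states t"
  shows "\<bar>int (pscore V1 E1 X (states t) f) - int (pscore V2 E2 X (states t) f)\<bar> \<le> dMP t V1 E1 V2 E2 X"
proof -
  let ?S = "{\<bar>int (pscore V1 E1 X (states t) f) - int (pscore V2 E2 X (states t) f)\<bar> | f.
      \<forall>x\<in>X. f x \<in> states t}"
  have "?S \<subseteq> {0 .. int (card E1 + card E2)}"
    using T1.pscore_le_card_edges[OF assms(1)] T2.pscore_le_card_edges[OF assms(1)] by fastforce
  then have "finite ?S" using finite_subset by blast
  then show ?thesis unfolding dMP_def using assms(2) by (intro Max_ge) blast+
qed

end

lemma card_Pow_odd_inter: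
  assumes fin: "finite A" and x: "x \<in> A" "x \<in> S"
  shows "2 * card {C\<in>Pow A. odd (card (C \<inter> S))} = 2 ^ card A"
proof -
  text \<open>Toggling \<open>x\<close> is a parity-reversing involution of \<open>Pow A\<close>.\<close>
  define \<phi> where "\<phi> C = (if x \<in> C then C - {x} else insert x C)" for C
  define Od where "Od = {C\<in>Pow A. odd (card (C \<inter> S))}"
  define Ev where "Ev = {C\<in>Pow A. \<not> odd (card (C \<inter> S))}"
  have finC: "\<And>C. C \<in> Pow A \<Longrightarrow> finite (C \<inter> S)" using fin by (meson PowD finite_Int finite_subset)
  have par: "odd (card (\<phi> C \<inter> S)) \<longleftrightarrow> \<not> odd (card (C \<inter> S))" if C: "C \<in> Pow A" for C
  proof (cases "x \<in> C")
    case True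
    then have e: "\<phi> C \<inter> S = (C \<inter> S) - {x}" unfolding \<phi>_def by auto
    have xi: "x \<in> C \<inter> S" using True x by simp
    have "card (C \<inter> S) = Suc (card ((C \<inter> S) - {x}))" using card.remove[OF finC[OF C] xi] .
    then show ?thesis using e by simp
  next
    case False
    then have "\<phi> C \<inter> S = insert x (C \<inter> S)" unfolding \<phi>_def using x by auto
    moreover have "x \<notin> C \<inter> S" using False by simp
    ultimately show ?thesis using finC[OF C] by simp
  qed
  have inv: "\<phi> (\<phi> C) = C" for C unfolding \<phi>_def by auto
  have pow: "C \<in> Pow A \<Longrightarrow> \<phi> C \<in> Pow A" for C unfolding \<phi>_def using x by auto
  have "bij_betw \<phi> Od Ev"
  proof (rule bij_betw_byWitness[where f'=\<phi>])
    show "\<forall>a\<in>Od. \<phi> (\<phi> a) = a" using inv by simp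
    show "\<forall>a\<in>Ev. \<phi> (\<phi> a) = a" using inv by simp
    show "\<phi> ` Od \<subseteq> Ev" unfolding Od_def Ev_def using par pow by auto
    show "\<phi> ` Ev \<subseteq> Od" unfolding Od_def Ev_def using par pow by auto
  qed
  then have "card Od = card Ev" by (rule bij_betw_same_card)
  moreover have "card Od + card Ev = card (Pow A)"
  proof -
    have "Pow A = Od \<union> Ev" "Od \<inter> Ev = {}" unfolding Od_def Ev_def by auto
    moreover have "finite Od" "finite Ev" unfolding Od_def Ev_def using fin by auto
    ultimately show ?thesis by (metis card_Un_disjoint)
  qed
  ultimately show ?thesis unfolding Od_def using card_Pow[of A] fin by simp
qed

lemma sum_card_filter_swap:
  assumes "finite P" "finite K"
  shows "(\<Sum>C\<in>P. card {k\<in>K. R C k}) = (\<Sum>k\<in>K. card {C\<in>P. R C k})"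
proof -
  have "(\<Sum>C\<in>P. card {k\<in>K. R C k}) = (\<Sum>C\<in>P. \<Sum>k\<in>K. if R C k then 1 else (0::nat))"
    using assms by (simp add: sum.inter_filter[symmetric])
  also have "\<dots> = (\<Sum>k\<in>K. \<Sum>C\<in>P. if R C k then 1 else (0::nat))" by (rule sum.swap)
  also have "\<dots> = (\<Sum>k\<in>K. card {C\<in>P. R C k})"
    using assms by (simp add: sum.inter_filter[symmetric])
  finally show ?thesis .
qed

lemma sum_card_Pow:
  assumes fin: "finite A"
  shows "2 * (\<Sum>C\<in>Pow A. card C) = card A * 2 ^ card A"
proof -
  have "(\<Sum>C\<in>Pow A. card C) = (\<Sum>C\<in>Pow A. card {x\<in>A. x \<in> C})"
    by (intro sum.cong refl arg_cong[where f = card]) auto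
  also have "\<dots> = (\<Sum>x\<in>A. card {C\<in>Pow A. x \<in> C})"
    using fin by (intro sum_card_filter_swap) auto
  finally have "2 * (\<Sum>C\<in>Pow A. card C) = (\<Sum>x\<in>A. 2 * card {C\<in>Pow A. x \<in> C})"
    by (simp add: sum_distrib_left)
  also have "\<dots> = (\<Sum>x\<in>A. 2 ^ card A)"
  proof (rule sum.cong[OF refl])
    fix x assume x: "x \<in> A"
    have "{C\<in>Pow A. x \<in> C} = {C\<in>Pow A. odd (card (C \<inter> {x}))}" by (auto simp: Int_insert_right)
    then show "2 * card {C\<in>Pow A. x \<in> C} = 2 ^ card A" using card_Pow_odd_inter[OF fin x, of "{x}"] by simp
  qed
  finally show ?thesis by simp
qed

text \<open>The averaging argument: over all \<open>C \<subseteq> A\<close>, each \<open>k\<close> is hit by an odd number of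
  elements of \<open>C\<close> for exactly half of the \<open>C\<close>, and \<open>C\<close> has \<open>|A|/2\<close> elements on average.\<close>
lemma exists_subset_odd_count_ge:
  fixes K :: "'k set" and A :: "'a set" and R :: "'k \<Rightarrow> 'a \<Rightarrow> bool"
  assumes K: "finite K" and A: "finite A" and ex: "\<And>k. k \<in> K \<Longrightarrow> \<exists>x\<in>A. R k x"
  shows "\<exists>C\<subseteq>A. int (card K) - int (card A) \<le>
    2 * (int (card {k\<in>K. odd (card {x\<in>C. R k x})}) - int (card C))"
proof (rule ccontr)
  let ?n = "card A" and ?odd = "\<lambda>C. card {k\<in>K. odd (card {x\<in>C. R k x})}"
  assume "\<not> ?thesis"
  then have lt: "2 * (int (?odd C) - int (card C)) < int (card K) - int ?n" if "C \<in> Pow A" for C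
    using that by (auto simp: not_le)
  have "2 * card {C\<in>Pow A. odd (card {x\<in>C. R k x})} = 2 ^ ?n" if k: "k \<in> K" for k
  proof -
    obtain x where "x \<in> A" "R k x" using ex[OF k] by blast
    moreover have "{x\<in>C. R k x} = C \<inter> {x. R k x}" for C by auto
    ultimately show ?thesis using card_Pow_odd_inter[OF A, of x "{x. R k x}"] by simp
  qed
  moreover have "(\<Sum>C\<in>Pow A. ?odd C) = (\<Sum>k\<in>K. card {C\<in>Pow A. odd (card {x\<in>C. R k x})})"
    using A K by (intro sum_card_filter_swap) auto
  ultimately have odd_sum: "2 * (\<Sum>C\<in>Pow A. ?odd C) = card K * 2 ^ ?n"
    by (simp add: sum_distrib_left)
  have "(\<Sum>C\<in>Pow A. 2 * (int (?odd C) - int (card C))) < (\<Sum>C\<in>Pow A. int (card K) - int ?n)"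
    using A lt by (intro sum_strict_mono) auto
  also have "\<dots> = 2 ^ ?n * (int (card K) - int ?n)" using A by (simp add: card_Pow)
  also have "\<dots> = int (2 * (\<Sum>C\<in>Pow A. ?odd C)) - int (2 * (\<Sum>C\<in>Pow A. card C))"
    using odd_sum sum_card_Pow[OF A] by (simp add: algebra_simps)
  also have "\<dots> = (\<Sum>C\<in>Pow A. 2 * (int (?odd C) - int (card C)))"
    by (simp add: sum_subtractf sum_distrib_left)
  finally show False by simp
qed

context two_trees
begin

lemma dMP_lower_bound:
  fixes K :: "'k set" and u v :: "'k \<Rightarrow> 'v"
  assumes t: "t \<ge> 2" and K: "finite K" and A: "finite A" "A \<subseteq> E2"
    and uv: "\<And>k. k \<in> K \<Longrightarrow> u k \<in> X \<and> v k \<in> X"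
    and disj: "\<And>k k'. k \<in> K \<Longrightarrow> k' \<in> K \<Longrightarrow> k \<noteq> k' \<Longrightarrow>
        path_edges (tpath E1 (u k) (v k)) \<inter> path_edges (tpath E1 (u k') (v k')) = {}"
    and sep: "\<And>k. k \<in> K \<Longrightarrow> \<exists>e\<in>A. T2.side e (u k) \<noteq> T2.side e (v k)"
  shows "int (card K) - int (card A) \<le> 2 * dMP t V1 E1 V2 E2 X"
proof -
  obtain C where C: "C \<subseteq> A" and big: "int (card K) - int (card A) \<le>
      2 * (int (card {k\<in>K. odd (card {e\<in>C. T2.side e (u k) \<noteq> T2.side e (v k)})}) - int (card C))"
    using exists_subset_odd_count_ge[OF K A(1), of "\<lambda>k e. T2.side e (u k) \<noteq> T2.side e (v k)"] sep
    by auto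
  have finC: "finite C" using C A(1) finite_subset by blast
  define f where "f = T2.parity_character C"
  have states0: "0 \<in> states t" using less_2_in_states[OF t] by simp
  have fX: "\<forall>x\<in>X. f x \<in> states t" and fV2: "\<forall>x\<in>V2. f x \<in> states t"
    unfolding f_def using less_2_in_states[OF t] T2.parity_character_less_2 by blast+
  have "{k\<in>K. odd (card {e\<in>C. T2.side e (u k) \<noteq> T2.side e (v k)})} = {k\<in>K. f (u k) \<noteq> f (v k)}"
    unfolding f_def by (simp only: T2.parity_character_neq_iff[OF finC])
  also have "card \<dots> \<le> pscore V1 E1 X (states t) f"
    by (rule T1.card_disagreeing_pairs_le_pscore[OF states0 fX K uv disj])
  finally have p1: "card {k\<in>K. odd (card {e\<in>C. T2.side e (u k) \<noteq> T2.side e (v k)})}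
      \<le> pscore V1 E1 X (states t) f" .
  have "pscore V2 E2 X (states t) f \<le> changes E2 f"
    using fV2 by (intro T2.pscore_le_changes) auto
  also have "changes E2 f \<le> card C"
    unfolding f_def using C A(2) by (intro T2.changes_parity_character_le) blast
  finally have p2: "pscore V2 E2 X (states t) f \<le> card C" .
  have "int (pscore V1 E1 X (states t) f) - int (pscore V2 E2 X (states t) f) \<le> dMP t V1 E1 V2 E2 X"
    using abs_pscore_diff_le_dMP[OF states0 fX] by (simp add: abs_le_iff)
  then show ?thesis using big p1 p2 unfolding right_diff_distrib by linarith
qed

lemma dMP_lower_bound_quartets:
  assumes t: "t \<ge> 2" and Q: "finite Q" "\<forall>q\<in>Q. q \<subseteq> X"
    and wit: "\<And>q. q \<in> Q \<Longrightarrow> q = {a q, b q, c q, d q} \<and> {{a q, b q}, {c q, d q}} \<in> quartet_top E1 q \<and>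
      set (tpath E1 (a q) (b q)) \<inter> set (tpath E1 (c q) (d q)) = {} \<and> e q \<in> E2 \<and>
      T2.side (e q) (a q) \<noteq> T2.side (e q) (b q) \<and> T2.side (e q) (c q) \<noteq> T2.side (e q) (d q)"
    and legs: "\<forall>q\<in>Q. \<forall>q'\<in>Q. q \<noteq> q' \<longrightarrow> leg_disjoint E1 q q'"
  shows "int (card Q) \<le> 2 * dMP t V1 E1 V2 E2 X"
proof -
  define u where "u = (\<lambda>(q, i). if i then c q else a q)"
  define v where "v = (\<lambda>(q, i). if i then d q else b q)"
  have leg_sub: "path_edges (tpath E1 (u (q,i)) (v (q,i))) \<subseteq> leg_edges E1 q" if "q \<in> Q" for q i
  proof -
    have "{{a q, b q}, {c q, d q}} \<in> quartet_top E1 q" using wit[OF that] by blast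
    from tpath_edges_subset_leg_edges[OF this] show ?thesis unfolding u_def v_def by (cases i) auto
  qed
  have "int (card (Q \<times> (UNIV :: bool set))) - int (card (e ` Q)) \<le> 2 * dMP t V1 E1 V2 E2 X"
  proof (rule dMP_lower_bound[OF t])
    show "finite (Q \<times> (UNIV :: bool set))" "finite (e ` Q)" "e ` Q \<subseteq> E2" using Q wit by auto
    show "u k \<in> X \<and> v k \<in> X" if "k \<in> Q \<times> UNIV" for k
      using that wit Q(2) unfolding u_def v_def by fastforce
    show "\<exists>x\<in>e ` Q. T2.side x (u k) \<noteq> T2.side x (v k)" if "k \<in> Q \<times> UNIV" for k
      using that wit unfolding u_def v_def by fastforce
    fix k k' assume k: "k \<in> Q \<times> (UNIV :: bool set)" "k' \<in> Q \<times> UNIV" "k \<noteq> k'"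
    obtain q i q' i' where kk: "k = (q, i)" "k' = (q', i')" "q \<in> Q" "q' \<in> Q" using k by auto
    show "path_edges (tpath E1 (u k) (v k)) \<inter> path_edges (tpath E1 (u k') (v k')) = {}"
    proof (cases "q = q'")
      case True
      then have "set (tpath E1 (u k) (v k)) \<inter> set (tpath E1 (u k') (v k')) = {}"
        using wit[OF kk(3)] k(3) unfolding kk u_def v_def by auto
      then show ?thesis by (rule path_edges_disjointI)
    next
      case False
      then show ?thesis using leg_sub kk legs unfolding leg_disjoint_def by blast
    qed
  qed
  moreover have "card (e ` Q) \<le> card Q" using Q(1) by (rule card_image_le)
  ultimately show ?thesis by (simp add: card_cartesian_product)
qed

end

theorem mainTheorem11:
  fixes V1 V2 X :: "'v set" and E1 E2 :: "'v set set" and Q :: "'v set set" and t :: enat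
  assumes "is_tree_on V1 E1 X" and "is_tree_on V2 E2 X"
    and "\<forall>q\<in>Q. q \<subseteq> X \<and> card q = 4"
    and "\<forall>q\<in>Q. incompatible E1 E2 q"
    and "\<forall>q\<in>Q. \<forall>q'\<in>Q. q \<noteq> q' \<longrightarrow> leg_disjoint E1 q q'"
    and "t \<ge> 2"
  shows "real_of_int (dMP t V1 E1 V2 E2 X) \<ge> real (card Q) / 27"
proof -
  interpret two_trees V1 E1 V2 E2 X
    unfolding two_trees_def tree_def using assms(1,2) by blast
  have "finite X" using T1.leaves_subset T1.finite_V finite_subset by blast
  then have finQ: "finite Q" using assms(3) by (meson Pow_iff finite_Pow_iff finite_subset subsetI)
  obtain a b c d e where "\<And>q. q \<in> Q \<Longrightarrow> q = {a q, b q, c q, d q} \<and> {{a q, b q}, {c q, d q}} \<in> quartet_top E1 q \<and>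
      set (tpath E1 (a q) (b q)) \<inter> set (tpath E1 (c q) (d q)) = {} \<and> e q \<in> E2 \<and>
      T2.side (e q) (a q) \<noteq> T2.side (e q) (b q) \<and> T2.side (e q) (c q) \<noteq> T2.side (e q) (d q)"
    using incompatible_quartet_crossing_edge assms(3,4) by metis
  then have "int (card Q) \<le> 2 * dMP t V1 E1 V2 E2 X"
    using dMP_lower_bound_quartets[OF assms(6) finQ] assms(3,5) by blast
  then have "real (card Q) \<le> 2 * real_of_int (dMP t V1 E1 V2 E2 X)"
    by (metis of_int_le_iff of_int_mult of_int_numeral of_int_of_nat_eq)
  then show ?thesis by linarith
qed

end
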